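(* Let $L\ge 2$ and consider the tandem network of $L$ queues on a ring described in the context, in which a client served at queue $i$ moves to queue $i+1 \bmod L$. Fix $\lambda>0$ and, for each $i$, let $\pi_i^\lambda$ be a stationary probability distribution of the isolated queue $i$ fed by a Poisson arrival process of rate $\lambda$. Suppose that for every $i\in\{0,\dots,L-1\}$ and every $z_i\in E_i$ the following partial balance equations hold: $$\sum_{z\in V_i^+(z_i)}\mu(z)\,p_i^-(z,z_i)\,\pi_i^\lambda(z)=\lambda\,\pi_i^\lambda(z_i),$$ $$\mu(z_i)\pi_i^\lambda(z_i)+\sum_{z\in V_i^0(z_i)}q_i^0(z_i,z)\,\pi_i^\lambda(z_i)=\sum_{z\in V_i^-(z_i)}\lambda\,p_i^+(z,z_i)\,\pi_i^\lambda(z)+\sum_{z\in V_i^0(z_i)}q_i^0(z,z_i)\,\pi_i^\lambda(z).$$ Then for every integer $N\ge 0$ such that $Z_N:=\sum_{(z_0,\dots,z_{L-1})\in\Omega_N}\prod_{i}\pi_i^\lambda(z_i)>0$, where $\Omega_N=\{(z_0,\dots,z_{L-1})\in\prod_i E_i:\ \sum_i n(z_i)=N\}$, the probability measure on $\Omega_N$ $$P(z_0,\dots,z_{L-1})=\frac{\prod_{i=0}^{L-1}\pi_i^\lambda(z_i)}{Z_N}$$ (i.e. the product measure $\prod_i\pi_i^\lambda$ conditioned on the total number of clients being $N$) is a stationary distribution of the network dynamics restricted to $\Omega_N$.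
   Context: Queues with stochastic service rates. Each queue $i\in\{0,\dots,L-1\}$ has a countable state space $E_i\subset\mathbb N\times\mathbb R_+$; a state $z=(n,\mu)$ records the number of clients $n=n(z)$ and the current service rate $\mu=\mu(z)$, with $\mu(z)=0$ whenever $n(z)=0$. Write $V_i^+(z)=\{z'\in E_i: n(z')=n(z)+1\}$, $V_i^-(z)=\{z'\in E_i:n(z')=n(z)-1\}$, $V_i^0(z)=\{z'\in E_i: n(z')=n(z)\}$. For each $i$ there are transition probabilities $p_i^+(z,\cdot)$ on $V_i^+(z)$ (for all $z$) and $p_i^-(z,\cdot)$ on $V_i^-(z)$ (for $n(z)\ge1$), each summing to $1$, and nonnegative internal rates $q_i^0(z,z')$, $z'\in V_i^0(z)$. The isolated queue $i$ with arrival rate $\lambda$ is the continuous-time Markov chain on $E_i$ with jump rates $q_i(z,z')=\lambda p_i^+(z,z')\mathbf 1_{z'\in V_i^+(z)}+\mu(z)p_i^-(z,z')\mathbf 1_{z'\in V_i^-(z)}+q_i^0(z,z')\mathbf 1_{z'\in V_i^0(z)}$. The network is the continuous-time Markov chain on $\prod_i E_i$ in which: (a) for each $i$ with $n(z_i)\ge1$, at rate $\mu(z_i)p_i^-(z_i,z')p_{i+1}^+(z_{i+1},z'')$ (indices mod $L$) the state changes by $z_i\to z'\in V_i^-(z_i)$ and simultaneously $z_{i+1}\to z''\in V_{i+1}^+(z_{i+1})$; (b) for each $i$, at rate $q_i^0(z_i,z')$ the state changes by $z_i\to z'\in V_i^0(z_i)$, other coordinates unchanged. Total jump rates out of each state are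 assumed finite. The total number of clients is conserved, so the dynamics preserves each $\Omega_N$. *)

theory Defs
  imports "HOL-Analysis.Analysis"
begin

text \<open>A queue state is a pair (n, mu): number of clients and current service rate.\<close>
type_synonym qstate = "nat \<times> real"

definition Vp :: "qstate set \<Rightarrow> qstate \<Rightarrow> qstate set" where
  "Vp E z = {z' \<in> E. fst z' = fst z + 1}"

definition Vm :: "qstate set \<Rightarrow> qstate \<Rightarrow> qstate set" where
  "Vm E z = {z' \<in> E. fst z' + 1 = fst z}"

definition V0 :: "qstate set \<Rightarrow> qstate \<Rightarrow> qstate set" where
  "V0 E z = {z' \<in> E. fst z' = fst z}"

definition iso_rate ::
  "qstate set \<Rightarrow> (qstate \<Rightarrow> qstate \<Rightarrow> real) \<Rightarrow> (qstate \<Rightarrow> qstate \<Rightarrow> real)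
   \<Rightarrow> (qstate \<Rightarrow> qstate \<Rightarrow> real) \<Rightarrow> real \<Rightarrow> qstate \<Rightarrow> qstate \<Rightarrow> real" where
  "iso_rate E pp pm q0 lam z z' =
     (if z' \<in> Vp E z then lam * pp z z' else 0)
   + (if z' \<in> Vm E z then snd z * pm z z' else 0)
   + (if z' \<in> V0 E z then q0 z z' else 0)"

definition net_rate ::
  "nat \<Rightarrow> (nat \<Rightarrow> qstate set) \<Rightarrow> (nat \<Rightarrow> qstate \<Rightarrow> qstate \<Rightarrow> real)
   \<Rightarrow> (nat \<Rightarrow> qstate \<Rightarrow> qstate \<Rightarrow> real) \<Rightarrow> (nat \<Rightarrow> qstate \<Rightarrow> qstate \<Rightarrow> real)
   \<Rightarrow> (nat \<Rightarrow> qstate) \<Rightarrow> (nat \<Rightarrow> qstate) \<Rightarrow> real" where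
  "net_rate L E pp pm q0 x y =
     (\<Sum>i<L. if 1 \<le> fst (x i)
                \<and> y = x(i := y i, Suc i mod L := y (Suc i mod L))
                \<and> y i \<in> Vm (E i) (x i)
                \<and> y (Suc i mod L) \<in> Vp (E (Suc i mod L)) (x (Suc i mod L))
             then snd (x i) * pm i (x i) (y i)
                  * pp (Suc i mod L) (x (Suc i mod L)) (y (Suc i mod L))
             else 0)
   + (\<Sum>i<L. if y = x(i := y i) \<and> y i \<in> V0 (E i) (x i)
             then q0 i (x i) (y i) else 0)"

definition stationary_dist :: "'s set \<Rightarrow> ('s \<Rightarrow> 's \<Rightarrow> real) \<Rightarrow> ('s \<Rightarrow> real) \<Rightarrow> bool" where
  "stationary_dist S q P \<longleftrightarrow>
     (\<forall>x\<in>S. 0 \<le> P x) \<and> (P has_sum 1) S \<and>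
     (\<forall>x\<in>S. (q x) summable_on (S - {x}) \<and>
        ((\<lambda>y. P y * q y x) has_sum (P x * (\<Sum>\<^sub>\<infinity>y\<in>S - {x}. q x y))) (S - {x}))"

definition Omega :: "nat \<Rightarrow> (nat \<Rightarrow> qstate set) \<Rightarrow> nat \<Rightarrow> (nat \<Rightarrow> qstate) set" where
  "Omega L E N = {x \<in> PiE {..<L} E. (\<Sum>i<L. fst (x i)) = N}"

end

theory Submission
  imports Defs
begin

text \<open>
  Fix a configuration x with N clients.  The total rate out of x is the sum over the queues i of
  the service rate of queue i plus its internal jump rate; the probability flux into x splits in
  the same way into transfers from queue i to queue i+1 and internal jumps of queue i.  Under the
  product weight, the transfer flux i -> i+1 evaluates (by the first partial balance equation
  for queue i) to the arrival part of the flux into x(i+1), computed in the isolated queue i+1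
  with a Poisson input of rate lam.  Re-indexing along the ring, the second partial balance
  equation of each queue then turns the total inflow into weight x times the total outflow.
  This is global balance for the unnormalised product weight; dividing by Z gives the theorem.
\<close>

text \<open>The sum of a product of two real summable families over a product set
  (absolute summability is automatic for real-valued unordered sums).\<close>

lemma has_sum_product:
  fixes f :: "'a \<Rightarrow> real" and g :: "'b \<Rightarrow> real"
  assumes f: "(f has_sum a) A" and g: "(g has_sum b) B"
  shows "((\<lambda>(u, v). f u * g v) has_sum (a * b)) (A \<times> B)"
proof -
  have abs_f: "(\<lambda>u. norm (f u)) summable_on A" and abs_g: "(\<lambda>v. norm (g v)) summable_on B"
    using f g summable_on_iff_abs_summable_on_real has_sum_imp_summable by blast+
  have "(\<lambda>p. norm ((\<lambda>(u, v). f u * g v) p)) summable_on A \<times> B"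
  proof (rule Infinite_Sum.abs_summable_on_Sigma_iff[THEN iffD2], intro conjI ballI)
    fix u
    show "(\<lambda>v. norm ((\<lambda>(u, v). f u * g v) (u, v))) summable_on B"
      using summable_on_cmult_right[OF abs_g, of "norm (f u)"] by (simp add: abs_mult)
  next
    have "(\<lambda>u. norm (norm (f u) * (\<Sum>\<^sub>\<infinity>v\<in>B. norm (g v)))) summable_on A"
      using summable_on_cmult_left[OF abs_f] by (simp add: norm_mult infsum_nonneg)
    then show "(\<lambda>u. norm (\<Sum>\<^sub>\<infinity>v\<in>B. norm ((\<lambda>(u, v). f u * g v) (u, v)))) summable_on A"
      by (simp add: abs_mult infsum_cmult_right')
  qed
  then have "(\<lambda>(u, v). f u * g v) summable_on A \<times> B"
    by (rule abs_summable_summable)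
  then show ?thesis
    using has_sum_SigmaI[where f="\<lambda>(u, v). f u * g v" and g="\<lambda>u. f u * b" and B="\<lambda>_. B"]
      has_sum_cmult_right[OF g] has_sum_cmult_left[OF f] by simp
qed

lemma has_sum_finite_family:
  fixes f :: "'i \<Rightarrow> 'a \<Rightarrow> real"
  assumes "finite I" and "\<And>i. i \<in> I \<Longrightarrow> (f i has_sum s i) A"
  shows "((\<lambda>y. \<Sum>i\<in>I. f i y) has_sum (\<Sum>i\<in>I. s i)) A"
  using assms by (induction I rule: finite_induct) (simp_all add: has_sum_add)

lemma has_sum_via_injection:
  fixes g :: "'a \<Rightarrow> real"
  assumes "inj_on h D" and "h ` D \<subseteq> S"
    and "\<And>y. y \<in> S \<Longrightarrow> y \<notin> h ` D \<Longrightarrow> g y = 0"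
    and "((\<lambda>d. g (h d)) has_sum s) D"
  shows "(g has_sum s) S"
proof -
  have "(g has_sum s) (h ` D)"
    using has_sum_reindex[OF assms(1), of g s] assms(4) by (simp add: comp_def)
  then show ?thesis
    by (rule has_sum_cong_neutral[THEN iffD1, rotated -1]) (use assms(2,3) in auto)
qed

lemma infsum_remove_point:
  fixes f :: "'a \<Rightarrow> real"
  assumes "f summable_on A" and "z \<in> A"
  shows "infsum f A = f z + infsum f (A - {z})"
proof -
  have "infsum f (insert z (A - {z})) = f z + infsum f (A - {z})"
    using assms by (intro infsum_insert summable_on_subset[OF assms(1)]) auto
  then show ?thesis
    using assms(2) by (simp add: insert_absorb)
qed

lemma prod_fun_upd:
  fixes g :: "'i \<Rightarrow> 'a \<Rightarrow> 'b::comm_monoid_mult"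
  assumes "finite A" and "i \<in> A"
  shows "(\<Prod>m\<in>A. g m ((x(i := a)) m)) = g i a * (\<Prod>m\<in>A - {i}. g m (x m))"
  using assms by (simp add: prod.remove)

lemma sum_fun_upd:
  fixes g :: "'i \<Rightarrow> 'a \<Rightarrow> 'b::comm_monoid_add"
  assumes "finite A" and "i \<in> A"
  shows "(\<Sum>m\<in>A. g m ((x(i := a)) m)) = g i a + (\<Sum>m\<in>A - {i}. g m (x m))"
  using assms by (simp add: sum.remove)

lemma prod_fun_upd2:
  fixes g :: "'i \<Rightarrow> 'a \<Rightarrow> 'b::comm_monoid_mult"
  assumes "finite A" and "i \<in> A" and "k \<in> A" and "i \<noteq> k"
  shows "(\<Prod>m\<in>A. g m ((x(i := a, k := b)) m)) = g i a * g k b * (\<Prod>m\<in>A - {i, k}. g m (x m))"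
proof -
  have "(\<Prod>m\<in>A. g m ((x(i := a, k := b)) m)) = g k b * (\<Prod>m\<in>A - {k}. g m ((x(i := a)) m))"
    by (rule prod_fun_upd) (use assms in auto)
  also have "(\<Prod>m\<in>A - {k}. g m ((x(i := a)) m)) = g i a * (\<Prod>m\<in>A - {k} - {i}. g m (x m))"
    by (rule prod_fun_upd) (use assms in auto)
  also have "A - {k} - {i} = A - {i, k}" by auto
  finally show ?thesis by (simp only: ac_simps)
qed

lemma sum_fun_upd2:
  fixes g :: "'i \<Rightarrow> 'a \<Rightarrow> 'b::comm_monoid_add"
  assumes "finite A" and "i \<in> A" and "k \<in> A" and "i \<noteq> k"
  shows "(\<Sum>m\<in>A. g m ((x(i := a, k := b)) m)) = g i a + g k b + (\<Sum>m\<in>A - {i, k}. g m (x m))"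
proof -
  have "(\<Sum>m\<in>A. g m ((x(i := a, k := b)) m)) = g k b + (\<Sum>m\<in>A - {k}. g m ((x(i := a)) m))"
    by (rule sum_fun_upd) (use assms in auto)
  also have "(\<Sum>m\<in>A - {k}. g m ((x(i := a)) m)) = g i a + (\<Sum>m\<in>A - {k} - {i}. g m (x m))"
    by (rule sum_fun_upd) (use assms in auto)
  also have "A - {k} - {i} = A - {i, k}" by auto
  finally show ?thesis by (simp only: ac_simps)
qed

lemma inj_on_fun_upd: "inj_on (\<lambda>a. x(i := a)) D"
  by (rule inj_onI) (metis fun_upd_same)

lemma inj_on_fun_upd2:
  assumes "i \<noteq> k"
  shows "inj_on (\<lambda>(a, b). x(i := a, k := b)) D"
proof (rule inj_onI, clarify)
  fix a b a' b' assume eq: "x(i := a, k := b) = x(i := a', k := b')"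
  from fun_cong[OF eq, of i] fun_cong[OF eq, of k] assms show "a = a' \<and> b = b'" by auto
qed

lemma Omega_component: "y \<in> Omega L E N \<Longrightarrow> i < L \<Longrightarrow> y i \<in> E i"
  by (auto simp: Omega_def PiE_iff)

lemma Omega_fun_upd:
  assumes x: "x \<in> Omega L E N" and i: "i < L" and a: "a \<in> E i" and n: "fst a = fst (x i)"
  shows "x(i := a) \<in> Omega L E N"
proof -
  have "(\<Sum>m<L. fst ((x(i := a)) m)) = fst a + (\<Sum>m\<in>{..<L} - {i}. fst (x m))"
    using i by (intro sum_fun_upd[where g="\<lambda>_. fst"]) auto
  also have "\<dots> = (\<Sum>m<L. fst (x m))"
    using i n by (simp add: sum.remove)
  finally have "(\<Sum>m<L. fst ((x(i := a)) m)) = (\<Sum>m<L. fst (x m))" .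
  then show ?thesis
    using x i a by (auto simp: Omega_def PiE_iff extensional_def)
qed

lemma Omega_fun_upd2:
  assumes x: "x \<in> Omega L E N" and ik: "i < L" "k < L" "i \<noteq> k"
    and ab: "a \<in> E i" "b \<in> E k" and n: "fst a + fst b = fst (x i) + fst (x k)"
  shows "x(i := a, k := b) \<in> Omega L E N"
proof -
  have "(\<Sum>m<L. fst ((x(i := a, k := b)) m)) = fst a + fst b + (\<Sum>m\<in>{..<L} - {i, k}. fst (x m))"
    using ik by (intro sum_fun_upd2[where g="\<lambda>_. fst"]) auto
  also have "\<dots> = (\<Sum>m<L. fst ((x(i := x i, k := x k)) m))"
    using ik n by (subst sum_fun_upd2[where g="\<lambda>_. fst"]) auto
  finally have "(\<Sum>m<L. fst ((x(i := a, k := b)) m)) = (\<Sum>m<L. fst (x m))" by simp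
  then show ?thesis
    using x ik ab by (auto simp: Omega_def PiE_iff extensional_def)
qed

lemma stationary_dist_of_balance:
  fixes w :: "'s \<Rightarrow> real" and q :: "'s \<Rightarrow> 's \<Rightarrow> real"
  assumes nonneg: "\<And>x. x \<in> S \<Longrightarrow> w x \<ge> 0"
    and total: "(w has_sum Z) S" and Z: "Z > 0"
    and outflow: "\<And>x. x \<in> S \<Longrightarrow> (q x has_sum r x) (S - {x})"
    and inflow: "\<And>x. x \<in> S \<Longrightarrow> ((\<lambda>y. w y * q y x) has_sum w x * r x) (S - {x})"
  shows "stationary_dist S q (\<lambda>x. w x / Z)"
proof -
  have "((\<lambda>x. w x / Z) has_sum 1) S"
    using has_sum_cmult_right[OF total, of "inverse Z"] Z by (simp add: field_simps)
  moreover have "((\<lambda>y. w y / Z * q y x) has_sum (w x / Z * infsum (q x) (S - {x}))) (S - {x})"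
    if "x \<in> S" for x
    using has_sum_cmult_right[OF inflow[OF that], of "inverse Z"] infsumI[OF outflow[OF that]]
    by (simp add: field_simps)
  ultimately show ?thesis
    using nonneg Z outflow unfolding stationary_dist_def
    by (auto dest: has_sum_imp_summable)
qed

text \<open>The setting of the theorem: L queues on a ring with the hypotheses actually used, namely
  normalised routing probabilities, no service in empty queues, summable internal rates,
  a nonnegative weight \<open>\<pi> i\<close> per queue and the two partial balance equations.\<close>

locale tandem_ring =
  fixes L :: nat and lam :: real
    and E :: "nat \<Rightarrow> qstate set"
    and pp pm q0 :: "nat \<Rightarrow> qstate \<Rightarrow> qstate \<Rightarrow> real"
    and \<pi> :: "nat \<Rightarrow> qstate \<Rightarrow> real"
  assumes L2: "L \<ge> 2"
    and lam_pos: "lam > 0"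
    and mu_zero: "\<And>i z. i < L \<Longrightarrow> z \<in> E i \<Longrightarrow> fst z = 0 \<Longrightarrow> snd z = 0"
    and pp_sum: "\<And>i z. i < L \<Longrightarrow> z \<in> E i \<Longrightarrow> (pp i z has_sum 1) (Vp (E i) z)"
    and pm_sum: "\<And>i z. i < L \<Longrightarrow> z \<in> E i \<Longrightarrow> fst z \<ge> 1 \<Longrightarrow> (pm i z has_sum 1) (Vm (E i) z)"
    and q0_finite: "\<And>i z. i < L \<Longrightarrow> z \<in> E i \<Longrightarrow> (q0 i z) summable_on (V0 (E i) z)"
    and pi_nonneg: "\<And>i z. i < L \<Longrightarrow> z \<in> E i \<Longrightarrow> \<pi> i z \<ge> 0"
    and balance1: "\<And>i zi. i < L \<Longrightarrow> zi \<in> E i \<Longrightarrow>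
       ((\<lambda>z. snd z * pm i z zi * \<pi> i z) has_sum (lam * \<pi> i zi)) (Vp (E i) zi)"
    and balance2_sum1: "\<And>i zi. i < L \<Longrightarrow> zi \<in> E i \<Longrightarrow>
       (\<lambda>z. lam * pp i z zi * \<pi> i z) summable_on (Vm (E i) zi)"
    and balance2_sum2: "\<And>i zi. i < L \<Longrightarrow> zi \<in> E i \<Longrightarrow>
       (\<lambda>z. q0 i z zi * \<pi> i z) summable_on (V0 (E i) zi)"
    and balance2: "\<And>i zi. i < L \<Longrightarrow> zi \<in> E i \<Longrightarrow>
       snd zi * \<pi> i zi + (\<Sum>\<^sub>\<infinity>z\<in>V0 (E i) zi. q0 i zi z * \<pi> i zi)
       = (\<Sum>\<^sub>\<infinity>z\<in>Vm (E i) zi. lam * pp i z zi * \<pi> i z)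
         + (\<Sum>\<^sub>\<infinity>z\<in>V0 (E i) zi. q0 i z zi * \<pi> i z)"
begin

definition nxt :: "nat \<Rightarrow> nat" where
  "nxt i = Suc i mod L"

lemma nxt_less: "i < L \<Longrightarrow> nxt i < L"
  using L2 by (simp add: nxt_def)

lemma nxt_neq: "i < L \<Longrightarrow> nxt i \<noteq> i"
  using L2 by (cases "Suc i = L") (auto simp: nxt_def)

lemma bij_betw_nxt: "bij_betw nxt {..<L} {..<L}"
proof -
  have "inj_on nxt {..<L}"
    by (rule inj_onI) (auto simp: nxt_def mod_Suc split: if_splits)
  moreover have "nxt ` {..<L} \<subseteq> {..<L}"
    using nxt_less by auto
  ultimately show ?thesis
    by (simp add: bij_betw_def endo_inj_surj)
qed

definition transfer_rate :: "nat \<Rightarrow> (nat \<Rightarrow> qstate) \<Rightarrow> (nat \<Rightarrow> qstate) \<Rightarrow> real" where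
  "transfer_rate i x y =
     (if 1 \<le> fst (x i) \<and> y = x(i := y i, nxt i := y (nxt i))
         \<and> y i \<in> Vm (E i) (x i) \<and> y (nxt i) \<in> Vp (E (nxt i)) (x (nxt i))
      then snd (x i) * pm i (x i) (y i) * pp (nxt i) (x (nxt i)) (y (nxt i))
      else 0)"

definition internal_rate :: "nat \<Rightarrow> (nat \<Rightarrow> qstate) \<Rightarrow> (nat \<Rightarrow> qstate) \<Rightarrow> real" where
  "internal_rate i x y = (if y = x(i := y i) \<and> y i \<in> V0 (E i) (x i) then q0 i (x i) (y i) else 0)"

lemma net_rate_split:
  "net_rate L E pp pm q0 x y = (\<Sum>i<L. transfer_rate i x y) + (\<Sum>i<L. internal_rate i x y)"
  unfolding net_rate_def transfer_rate_def internal_rate_def nxt_def ..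

definition weight :: "(nat \<Rightarrow> qstate) \<Rightarrow> real" where
  "weight x = (\<Prod>i<L. \<pi> i (x i))"

definition weight_except :: "nat \<Rightarrow> (nat \<Rightarrow> qstate) \<Rightarrow> real" where
  "weight_except k x = (\<Prod>m\<in>{..<L} - {k}. \<pi> m (x m))"

lemma weight_split: "k < L \<Longrightarrow> weight x = \<pi> k (x k) * weight_except k x"
  by (simp add: weight_def weight_except_def prod.remove)

lemma weight_fun_upd: "k < L \<Longrightarrow> weight (x(k := a)) = \<pi> k a * weight_except k x"
  unfolding weight_def weight_except_def by (rule prod_fun_upd) auto

lemma weight_nonneg: "x \<in> Omega L E N \<Longrightarrow> weight x \<ge> 0"
  unfolding weight_def by (intro prod_nonneg) (auto intro: pi_nonneg Omega_component)

definition arrival_inflow :: "nat \<Rightarrow> qstate \<Rightarrow> real" where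
  "arrival_inflow k z = (\<Sum>\<^sub>\<infinity>b\<in>Vm (E k) z. pp k b z * \<pi> k b)"

definition internal_inflow :: "nat \<Rightarrow> qstate \<Rightarrow> real" where
  "internal_inflow k z = (\<Sum>\<^sub>\<infinity>a\<in>V0 (E k) z - {z}. q0 k a z * \<pi> k a)"

definition internal_outflow :: "nat \<Rightarrow> qstate \<Rightarrow> real" where
  "internal_outflow k z = (\<Sum>\<^sub>\<infinity>a\<in>V0 (E k) z - {z}. q0 k z a)"

lemma arrival_inflow_has_sum:
  assumes "k < L" and "z \<in> E k"
  shows "((\<lambda>b. pp k b z * \<pi> k b) has_sum arrival_inflow k z) (Vm (E k) z)"
proof -
  have "(\<lambda>b. lam * (pp k b z * \<pi> k b)) summable_on Vm (E k) z"
    using balance2_sum1[OF assms] by (simp add: mult.assoc)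
  then have "(\<lambda>b. pp k b z * \<pi> k b) summable_on Vm (E k) z"
    using summable_on_cmult_right' lam_pos by (metis less_irrefl)
  then show ?thesis
    unfolding arrival_inflow_def by simp
qed

lemma internal_inflow_has_sum:
  assumes "k < L" and "z \<in> E k"
  shows "((\<lambda>a. q0 k a z * \<pi> k a) has_sum internal_inflow k z) (V0 (E k) z - {z})"
  using summable_on_subset[OF balance2_sum2[OF assms], of "V0 (E k) z - {z}"]
  unfolding internal_inflow_def by auto

lemma internal_outflow_has_sum:
  assumes "k < L" and "z \<in> E k"
  shows "(q0 k z has_sum internal_outflow k z) (V0 (E k) z - {z})"
  using summable_on_subset[OF q0_finite[OF assms], of "V0 (E k) z - {z}"]
  unfolding internal_outflow_def by auto

text \<open>The hypotheses on the isolated queue, rewritten with the diagonal internal jump removed: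
  flux into a state equals the flux out of it, the departures being counted at rate
  \<open>snd z\<close>.\<close>

lemma local_balance:
  assumes k: "k < L" and z: "z \<in> E k"
  shows "lam * arrival_inflow k z + internal_inflow k z = \<pi> k z * (snd z + internal_outflow k z)"
proof -
  have z0: "z \<in> V0 (E k) z"
    using z by (simp add: V0_def)
  have out: "(\<Sum>\<^sub>\<infinity>a\<in>V0 (E k) z. q0 k z a * \<pi> k z) = (q0 k z z + internal_outflow k z) * \<pi> k z"
    using infsum_cmult_left'[of "q0 k z" "\<pi> k z"] infsum_remove_point[OF q0_finite[OF k z] z0]
    by (simp add: internal_outflow_def)
  have arrivals: "(\<Sum>\<^sub>\<infinity>b\<in>Vm (E k) z. lam * pp k b z * \<pi> k b) = lam * arrival_inflow k z"
    using infsum_cmult_right'[of lam "\<lambda>b. pp k b z * \<pi> k b"]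
    by (simp add: arrival_inflow_def mult.assoc)
  have inn: "(\<Sum>\<^sub>\<infinity>a\<in>V0 (E k) z. q0 k a z * \<pi> k a) = q0 k z z * \<pi> k z + internal_inflow k z"
    using infsum_remove_point[OF balance2_sum2[OF k z] z0] by (simp add: internal_inflow_def)
  show ?thesis
    using balance2[OF k z] out arrivals inn by (simp add: algebra_simps)
qed

context
  fixes N :: nat and x :: "nat \<Rightarrow> qstate"
  assumes x: "x \<in> Omega L E N"
begin

lemma x_component: "i < L \<Longrightarrow> x i \<in> E i"
  using x by (rule Omega_component)

lemma transfer_target:
  assumes i: "i < L" and a: "a \<in> E i" and b: "b \<in> E (nxt i)"
    and conserved: "fst a + fst b = fst (x i) + fst (x (nxt i))" and moved: "fst a \<noteq> fst (x i)"
  shows "x(i := a, nxt i := b) \<in> Omega L E N - {x}"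
proof -
  have "x(i := a, nxt i := b) \<in> Omega L E N"
    using nxt_less[OF i] nxt_neq[OF i] by (intro Omega_fun_upd2[OF x i _ _ a b conserved]) auto
  moreover have "(x(i := a, nxt i := b)) i \<noteq> x i"
    using nxt_neq[OF i] moved by auto
  ultimately show ?thesis
    by (metis DiffI singletonD)
qed

lemma internal_target:
  assumes i: "i < L" and a: "a \<in> V0 (E i) (x i) - {x i}"
  shows "x(i := a) \<in> Omega L E N - {x}"
proof -
  have "x(i := a) \<in> Omega L E N"
    using i a by (intro Omega_fun_upd[OF x]) (auto simp: V0_def)
  moreover have "x(i := a) \<noteq> x"
    using a by (metis DiffD2 fun_upd_same singletonI)
  ultimately show ?thesis by simp
qed

text \<open>Outflow from x by transfers i -> i+1: the departure rate \<open>snd (x i)\<close>, since the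
  routing probabilities of both queues sum to one.\<close>

lemma transfer_outflow:
  assumes i: "i < L"
  shows "(transfer_rate i x has_sum snd (x i)) (Omega L E N - {x})"
proof (cases "1 \<le> fst (x i)")
  case idle: False
  then have "transfer_rate i x = (\<lambda>_. 0)"
    by (simp add: transfer_rate_def fun_eq_iff)
  then show ?thesis
    using mu_zero[OF i x_component[OF i]] idle by simp
next
  case busy: True
  define k where "k = nxt i"
  have k: "k < L" "i \<noteq> k"
    using nxt_less[OF i] nxt_neq[OF i] by (auto simp: k_def)
  define D where "D = Vm (E i) (x i) \<times> Vp (E k) (x k)"
  show ?thesis
  proof (rule has_sum_via_injection[where h="\<lambda>(a, b). x(i := a, k := b)" and D=D])
    show "inj_on (\<lambda>(a, b). x(i := a, k := b)) D"
      using k(2) by (rule inj_on_fun_upd2)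
    show "(\<lambda>(a, b). x(i := a, k := b)) ` D \<subseteq> Omega L E N - {x}"
      using transfer_target[OF i] by (auto simp: D_def Vm_def Vp_def k_def)
    show "transfer_rate i x y = 0" if "y \<notin> (\<lambda>(a, b). x(i := a, k := b)) ` D" for y
    proof (rule ccontr)
      assume "transfer_rate i x y \<noteq> 0"
      then have "y = x(i := y i, k := y k)" "(y i, y k) \<in> D"
        by (auto simp: transfer_rate_def D_def k_def split: if_splits)
      then show False using that by force
    qed
    have "((\<lambda>(a, b). pm i (x i) a * pp k (x k) b) has_sum 1 * 1) D"
      unfolding D_def
      using has_sum_product[OF pm_sum[OF i x_component[OF i] busy] pp_sum[OF k(1) x_component[OF k(1)]]] .
    then have "((\<lambda>(a, b). snd (x i) * (pm i (x i) a * pp k (x k) b)) has_sum snd (x i)) D"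
      using has_sum_cmult_right[where c="snd (x i)"] by (fastforce simp: case_prod_unfold)
    then show "((\<lambda>d. transfer_rate i x ((\<lambda>(a, b). x(i := a, k := b)) d)) has_sum snd (x i)) D"
      by (rule has_sum_cong[THEN iffD1, rotated]) (use busy k in \<open>auto simp: D_def transfer_rate_def k_def\<close>)
  qed
qed

lemma internal_outflow_net:
  assumes i: "i < L"
  shows "(internal_rate i x has_sum internal_outflow i (x i)) (Omega L E N - {x})"
proof (rule has_sum_via_injection[where h="\<lambda>a. x(i := a)" and D="V0 (E i) (x i) - {x i}"])
  show "inj_on (\<lambda>a. x(i := a)) (V0 (E i) (x i) - {x i})"
    by (rule inj_on_fun_upd)
  show "(\<lambda>a. x(i := a)) ` (V0 (E i) (x i) - {x i}) \<subseteq> Omega L E N - {x}"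
    using internal_target[OF i] by (rule image_subsetI)
  show "internal_rate i x y = 0"
    if "y \<in> Omega L E N - {x}" "y \<notin> (\<lambda>a. x(i := a)) ` (V0 (E i) (x i) - {x i})" for y
  proof (rule ccontr)
    assume "internal_rate i x y \<noteq> 0"
    then have "y = x(i := y i)" "y i \<in> V0 (E i) (x i)"
      by (auto simp: internal_rate_def split: if_splits)
    moreover from this have "y i \<noteq> x i"
      using that(1) by (metis DiffE fun_upd_triv singletonI)
    ultimately show False using that(2) by blast
  qed
  show "((\<lambda>a. internal_rate i x (x(i := a))) has_sum internal_outflow i (x i)) (V0 (E i) (x i) - {x i})"
    by (rule has_sum_cong[THEN iffD1, rotated, OF internal_outflow_has_sum[OF i x_component[OF i]]])
      (simp add: internal_rate_def)
qed

text \<open>Flux into x from transfers i -> i+1, parametrised by the states (a, b) of the two queues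
  before the transfer; the first partial balance equation of queue i sums out a.\<close>

lemma transfer_inflow_pairs:
  assumes i: "i < L"
  defines "k \<equiv> nxt i"
  shows "((\<lambda>(a, b). weight (x(i := a, k := b)) * transfer_rate i (x(i := a, k := b)) x)
           has_sum weight_except k x * (lam * arrival_inflow k (x k))) (Vp (E i) (x i) \<times> Vm (E k) (x k))"
proof -
  have k: "k < L" "i \<noteq> k"
    using nxt_less[OF i] nxt_neq[OF i] by (auto simp: k_def)
  define rest where "rest = (\<Prod>m\<in>{..<L} - {i, k}. \<pi> m (x m))"
  have weight_upd: "weight (x(i := a, k := b)) = \<pi> i a * \<pi> k b * rest" for a b
    unfolding weight_def rest_def using i k by (intro prod_fun_upd2) auto
  have weight_except_k: "weight_except k x = \<pi> i (x i) * rest"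
  proof -
    have "weight_except k x = \<pi> i (x i) * (\<Prod>m\<in>{..<L} - {k} - {i}. \<pi> m (x m))"
      unfolding weight_except_def using i k by (intro prod.remove) auto
    also have "{..<L} - {k} - {i} = {..<L} - {i, k}" by auto
    finally show ?thesis unfolding rest_def .
  qed
  have "((\<lambda>(a, b). (snd a * pm i a (x i) * \<pi> i a) * (pp k b (x k) * \<pi> k b))
          has_sum (lam * \<pi> i (x i) * arrival_inflow k (x k))) (Vp (E i) (x i) \<times> Vm (E k) (x k))"
    by (rule has_sum_product[OF balance1[OF i x_component[OF i]]
                                arrival_inflow_has_sum[OF k(1) x_component[OF k(1)]]])
  then have "((\<lambda>(a, b). rest * ((snd a * pm i a (x i) * \<pi> i a) * (pp k b (x k) * \<pi> k b)))
          has_sum (weight_except k x * (lam * arrival_inflow k (x k)))) (Vp (E i) (x i) \<times> Vm (E k) (x k))"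
    using has_sum_cmult_right[where c=rest] unfolding weight_except_k
    by (fastforce simp: case_prod_unfold ac_simps)
  then show ?thesis
  proof (rule has_sum_cong[THEN iffD1, rotated], clarify)
    fix a b assume "a \<in> Vp (E i) (x i)" "b \<in> Vm (E k) (x k)"
    then have "fst a = fst (x i) + 1" "fst b + 1 = fst (x k)"
      by (auto simp: Vm_def Vp_def)
    then show "rest * ((snd a * pm i a (x i) * \<pi> i a) * (pp k b (x k) * \<pi> k b))
        = weight (x(i := a, k := b)) * transfer_rate i (x(i := a, k := b)) x"
      using k x_component[OF i] x_component[OF k(1)]
      by (simp add: weight_upd transfer_rate_def k_def[symmetric] Vm_def Vp_def fun_upd_twist)
  qed
qed

lemma transfer_inflow:
  assumes i: "i < L"
  defines "k \<equiv> nxt i"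
  shows "((\<lambda>y. weight y * transfer_rate i y x)
           has_sum weight_except k x * (lam * arrival_inflow k (x k))) (Omega L E N - {x})"
proof -
  have k: "k < L" "i \<noteq> k"
    using nxt_less[OF i] nxt_neq[OF i] by (auto simp: k_def)
  define D where "D = Vp (E i) (x i) \<times> Vm (E k) (x k)"
  show ?thesis
  proof (rule has_sum_via_injection[where h="\<lambda>(a, b). x(i := a, k := b)" and D=D])
    show "inj_on (\<lambda>(a, b). x(i := a, k := b)) D"
      using k(2) by (rule inj_on_fun_upd2)
    show "(\<lambda>(a, b). x(i := a, k := b)) ` D \<subseteq> Omega L E N - {x}"
      using transfer_target[OF i] by (auto simp: D_def Vm_def Vp_def k_def)
    show "weight y * transfer_rate i y x = 0"
      if y: "y \<in> Omega L E N - {x}" "y \<notin> (\<lambda>(a, b). x(i := a, k := b)) ` D" for y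
    proof (rule ccontr)
      assume "weight y * transfer_rate i y x \<noteq> 0"
      then have jump: "x = y(i := x i, k := x k)" "x i \<in> Vm (E i) (y i)" "x k \<in> Vp (E k) (y k)"
        by (auto simp: transfer_rate_def k_def split: if_splits)
      have "y = x(i := y i, k := y k)"
        using jump(1) by (auto simp: fun_eq_iff)
      moreover have "(y i, y k) \<in> D"
        using jump(2,3) Omega_component[of y L E N] y(1) i k
        by (auto simp: D_def Vm_def Vp_def)
      ultimately show False using y(2) by force
    qed
    show "((\<lambda>d. weight ((\<lambda>(a, b). x(i := a, k := b)) d) * transfer_rate i ((\<lambda>(a, b). x(i := a, k := b)) d) x)
            has_sum weight_except k x * (lam * arrival_inflow k (x k))) D"
      using transfer_inflow_pairs[OF i] unfolding D_def k_def by (simp add: case_prod_unfold)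
  qed
qed

lemma internal_inflow_net:
  assumes i: "i < L"
  shows "((\<lambda>y. weight y * internal_rate i y x)
           has_sum weight_except i x * internal_inflow i (x i)) (Omega L E N - {x})"
proof (rule has_sum_via_injection[where h="\<lambda>a. x(i := a)" and D="V0 (E i) (x i) - {x i}"])
  show "inj_on (\<lambda>a. x(i := a)) (V0 (E i) (x i) - {x i})"
    by (rule inj_on_fun_upd)
  show "(\<lambda>a. x(i := a)) ` (V0 (E i) (x i) - {x i}) \<subseteq> Omega L E N - {x}"
    using internal_target[OF i] by (rule image_subsetI)
  show "weight y * internal_rate i y x = 0"
    if y: "y \<in> Omega L E N - {x}" "y \<notin> (\<lambda>a. x(i := a)) ` (V0 (E i) (x i) - {x i})" for y
  proof (rule ccontr)
    assume "weight y * internal_rate i y x \<noteq> 0"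
    then have jump: "x = y(i := x i)" "x i \<in> V0 (E i) (y i)"
      by (auto simp: internal_rate_def split: if_splits)
    have y_upd: "y = x(i := y i)"
      using jump(1) by (auto simp: fun_eq_iff)
    moreover have "y i \<in> V0 (E i) (x i) - {x i}"
      using jump(2) y_upd y(1) Omega_component[of y L E N i] i
      by (auto simp: V0_def)
    ultimately show False using y(2) by blast
  qed
  have "((\<lambda>a. weight_except i x * (q0 i a (x i) * \<pi> i a))
          has_sum weight_except i x * internal_inflow i (x i)) (V0 (E i) (x i) - {x i})"
    by (rule has_sum_cmult_right[OF internal_inflow_has_sum[OF i x_component[OF i]]])
  then show "((\<lambda>a. weight (x(i := a)) * internal_rate i (x(i := a)) x)
          has_sum weight_except i x * internal_inflow i (x i)) (V0 (E i) (x i) - {x i})"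
    by (rule has_sum_cong[THEN iffD1, rotated])
      (use x_component[OF i] in \<open>auto simp: weight_fun_upd[OF i] internal_rate_def V0_def\<close>)
qed

text \<open>Total jump rate out of x, and the global balance equations for the product weight:
  after re-indexing the transfer inflow along the ring, the second partial balance
  equation of each queue matches inflow and outflow queue by queue.\<close>

definition total_outflow :: "real" where
  "total_outflow = (\<Sum>i<L. snd (x i) + internal_outflow i (x i))"

lemma network_outflow: "(net_rate L E pp pm q0 x has_sum total_outflow) (Omega L E N - {x})"
  unfolding net_rate_split[abs_def] total_outflow_def sum.distrib
  by (intro has_sum_add has_sum_finite_family finite_lessThan transfer_outflow internal_outflow_net) simp_all

lemma network_inflow:
  "((\<lambda>y. weight y * net_rate L E pp pm q0 y x) has_sum weight x * total_outflow) (Omega L E N - {x})"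
proof -
  have "((\<lambda>y. weight y * net_rate L E pp pm q0 y x) has_sum
          (\<Sum>i<L. weight_except (nxt i) x * (lam * arrival_inflow (nxt i) (x (nxt i))))
          + (\<Sum>i<L. weight_except i x * internal_inflow i (x i))) (Omega L E N - {x})"
    unfolding net_rate_split distrib_left sum_distrib_left
    by (intro has_sum_add has_sum_finite_family finite_lessThan transfer_inflow internal_inflow_net) simp_all
  moreover have "(\<Sum>i<L. weight_except (nxt i) x * (lam * arrival_inflow (nxt i) (x (nxt i))))
      = (\<Sum>k<L. weight_except k x * (lam * arrival_inflow k (x k)))"
    by (rule sum.reindex_bij_betw[OF bij_betw_nxt])
  moreover have "(\<Sum>k<L. weight_except k x * (lam * arrival_inflow k (x k)))
      + (\<Sum>k<L. weight_except k x * internal_inflow k (x k)) = weight x * total_outflow"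
  proof -
    have "(\<Sum>k<L. weight_except k x * (lam * arrival_inflow k (x k)))
          + (\<Sum>k<L. weight_except k x * internal_inflow k (x k))
        = (\<Sum>k<L. weight_except k x * (lam * arrival_inflow k (x k) + internal_inflow k (x k)))"
      by (simp add: sum.distrib distrib_left)
    also have "\<dots> = (\<Sum>k<L. weight x * (snd (x k) + internal_outflow k (x k)))"
      by (intro sum.cong refl) (simp add: local_balance x_component weight_split[of k x for k])
    finally show ?thesis
      by (simp add: total_outflow_def sum_distrib_left)
  qed
  ultimately show ?thesis by simp
qed

end

end

theorem mainTheorem1:
  fixes L :: nat and lam :: real
    and E :: "nat \<Rightarrow> qstate set"
    and pp pm q0 :: "nat \<Rightarrow> qstate \<Rightarrow> qstate \<Rightarrow> real"
    and \<pi> :: "nat \<Rightarrow> qstate \<Rightarrow> real"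
  assumes L2: "L \<ge> 2"
    and lam_pos: "lam > 0"
    and E_countable: "\<And>i. i < L \<Longrightarrow> countable (E i)"
    and mu_nonneg: "\<And>i z. i < L \<Longrightarrow> z \<in> E i \<Longrightarrow> snd z \<ge> 0"
    and mu_zero: "\<And>i z. i < L \<Longrightarrow> z \<in> E i \<Longrightarrow> fst z = 0 \<Longrightarrow> snd z = 0"
    and pp_nonneg: "\<And>i z z'. i < L \<Longrightarrow> z \<in> E i \<Longrightarrow> z' \<in> Vp (E i) z \<Longrightarrow> pp i z z' \<ge> 0"
    and pp_sum: "\<And>i z. i < L \<Longrightarrow> z \<in> E i \<Longrightarrow> (pp i z has_sum 1) (Vp (E i) z)"
    and pm_nonneg: "\<And>i z z'. i < L \<Longrightarrow> z \<in> E i \<Longrightarrow> fst z \<ge> 1 \<Longrightarrow> z' \<in> Vm (E i) z \<Longrightarrow> pm i z z' \<ge> 0"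
    and pm_sum: "\<And>i z. i < L \<Longrightarrow> z \<in> E i \<Longrightarrow> fst z \<ge> 1 \<Longrightarrow> (pm i z has_sum 1) (Vm (E i) z)"
    and q0_nonneg: "\<And>i z z'. i < L \<Longrightarrow> z \<in> E i \<Longrightarrow> z' \<in> V0 (E i) z \<Longrightarrow> q0 i z z' \<ge> 0"
    and q0_finite: "\<And>i z. i < L \<Longrightarrow> z \<in> E i \<Longrightarrow> (q0 i z) summable_on (V0 (E i) z)"
    and \<pi>_stat: "\<And>i. i < L \<Longrightarrow> stationary_dist (E i) (iso_rate (E i) (pp i) (pm i) (q0 i) lam) (\<pi> i)"
    and balance1: "\<And>i zi. i < L \<Longrightarrow> zi \<in> E i \<Longrightarrow>
       ((\<lambda>z. snd z * pm i z zi * \<pi> i z) has_sum (lam * \<pi> i zi)) (Vp (E i) zi)"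
    and balance2_sum1: "\<And>i zi. i < L \<Longrightarrow> zi \<in> E i \<Longrightarrow>
       (\<lambda>z. lam * pp i z zi * \<pi> i z) summable_on (Vm (E i) zi)"
    and balance2_sum2: "\<And>i zi. i < L \<Longrightarrow> zi \<in> E i \<Longrightarrow>
       (\<lambda>z. q0 i z zi * \<pi> i z) summable_on (V0 (E i) zi)"
    and balance2: "\<And>i zi. i < L \<Longrightarrow> zi \<in> E i \<Longrightarrow>
       snd zi * \<pi> i zi + (\<Sum>\<^sub>\<infinity>z\<in>V0 (E i) zi. q0 i zi z * \<pi> i zi)
       = (\<Sum>\<^sub>\<infinity>z\<in>Vm (E i) zi. lam * pp i z zi * \<pi> i z)
         + (\<Sum>\<^sub>\<infinity>z\<in>V0 (E i) zi. q0 i z zi * \<pi> i z)"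
  shows "\<forall>N::nat.
     (let Z = (\<Sum>\<^sub>\<infinity>x\<in>Omega L E N. \<Prod>i<L. \<pi> i (x i)) in
      Z > 0 \<longrightarrow>
      stationary_dist (Omega L E N) (net_rate L E pp pm q0) (\<lambda>x. (\<Prod>i<L. \<pi> i (x i)) / Z))"
proof -
  interpret tandem_ring L lam E pp pm q0 \<pi>
  proof
    show "\<pi> i z \<ge> 0" if "i < L" "z \<in> E i" for i z
      using \<pi>_stat[OF that(1)] that(2) unfolding stationary_dist_def by blast
  qed (use assms in auto)
  show ?thesis
    unfolding Let_def
  proof (intro allI impI)
    fix N
    let ?Z = "\<Sum>\<^sub>\<infinity>x\<in>Omega L E N. \<Prod>i<L. \<pi> i (x i)"
    assume Z: "?Z > 0"
    then have "weight summable_on Omega L E N"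
      using infsum_not_exists unfolding weight_def by force
    then have total: "(weight has_sum ?Z) (Omega L E N)"
      unfolding weight_def by (simp add: has_sum_infsum)
    have "stationary_dist (Omega L E N) (net_rate L E pp pm q0) (\<lambda>x. weight x / ?Z)"
      using weight_nonneg total Z network_outflow network_inflow by (rule stationary_dist_of_balance)
    then show "stationary_dist (Omega L E N) (net_rate L E pp pm q0) (\<lambda>x. (\<Prod>i<L. \<pi> i (x i)) / ?Z)"
      unfolding weight_def .
  qed
qed

end
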